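(* Let $C_m=\frac{1}{m+1}\binom{2m}{m}$ denote the $m$-th Catalan number. For every integer $n\ge 2$, \[\sum_{i=1}^{n-1} 2^{2i-1}C_{i-1}C_{2n-1-2i}=4^{n-1}C_{n-1}-C_{2n-2}.\] *)

theory Defs
  imports Main
begin

text \<open>The m-th Catalan number C_m = binom(2m,m)/(m+1); the division is exact.\<close>
definition catalan :: "nat \<Rightarrow> nat" where
  "catalan m = ((2 * m) choose m) div (m + 1)"

end

theory Submission
  imports Defs "HOL-Computational_Algebra.Formal_Power_Series"
begin

text \<open>
  Let \<open>C(x) = \<Sum> C\<^sub>m x\<^sup>m\<close> and split \<open>C(x) = E(x\<^sup>2) + x D(x\<^sup>2)\<close> into even and odd parts.
  The equation \<open>C = 1 + x C\<^sup>2\<close> splits into \<open>E = 1 + 2xED\<close> and \<open>D = E\<^sup>2 + xD\<^sup>2\<close>, which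
  imply that \<open>E\<^sup>2\<close> solves the same quadratic equation as \<open>C(4x)\<close>; hence \<open>C(4x) = E\<^sup>2\<close>.
  Then \<open>C(4x) - E = E (E - 1) = 2x C(4x) D\<close>, and the identity is the coefficient
  of \<open>x^(n-1)\<close> in this equation.
\<close>

unbundle fps_syntax

lemma Suc_mult_catalan: "Suc m * catalan m = (2 * m) choose m"
proof -
  have "Suc m * ((2 * m) choose (Suc m)) = m * ((2 * m) choose m)"
    using Suc_times_binomial_add[of m "m - 1"] by (cases m) (simp_all add: mult_2)
  then have "(2 * m) choose m = Suc m * ((2 * m choose m) - (2 * m choose Suc m))"
    by (simp add: diff_mult_distrib2)
  then show ?thesis
    unfolding catalan_def by (metis Suc_eq_plus1 dvd_mult_div_cancel dvd_triv_left)
qed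

lemma catalan_Suc: "(m + 2) * catalan (Suc m) = (4 * m + 2) * catalan m"
proof -
  have "Suc m * ((m + 2) * catalan (Suc m)) = Suc m * ((2 * m + 2) choose (Suc m))"
    using Suc_mult_catalan[of "Suc m"] by simp
  also have "\<dots> = (2 * m + 2) * ((2 * m + 1) choose m)"
    using Suc_times_binomial[of m "2 * m + 1"] by simp
  also have "(2 * m + 1) choose m = (2 * m + 1) choose (Suc m)"
    using binomial_symmetric[of m "2 * m + 1"] by simp
  also have "(2 * m + 2) * \<dots> = 2 * (Suc m * (Suc (2 * m) choose (Suc m)))"
    by simp
  also have "\<dots> = Suc m * ((4 * m + 2) * catalan m)"
    unfolding Suc_times_binomial Suc_mult_catalan[symmetric] by (simp add: algebra_simps)
  finally show ?thesis by (rule mult_left_cancel[THEN iffD1, rotated]) simp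
qed

definition catalan_fps :: "int fps" where
  "catalan_fps = Abs_fps (\<lambda>n. int (catalan n))"

lemma catalan_fps_nth [simp]: "catalan_fps $ n = int (catalan n)"
  by (simp add: catalan_fps_def)

lemma catalan_fps_ode:
  "(fps_X - fps_const 4 * fps_X ^ 2) * fps_deriv catalan_fps = 1 - (1 - fps_const 2 * fps_X) * catalan_fps"
proof (rule fps_ext)
  fix n
  show "((fps_X - fps_const 4 * fps_X ^ 2) * fps_deriv catalan_fps) $ n = (1 - (1 - fps_const 2 * fps_X) * catalan_fps) $ n"
  proof (cases n)
    case 0
    then show ?thesis by (simp add: catalan_def)
  next
    case (Suc k)
    have "int ((k + 2) * catalan (Suc k)) = int ((4 * k + 2) * catalan k)"
      by (simp only: catalan_Suc)
    then show ?thesis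
      by (cases k) (simp_all add: Suc algebra_simps power2_eq_square)
  qed
qed

lemma fps_eq_0_of_ode:
  fixes g :: "'a::{idom,ring_char_0} fps"
  assumes ode: "(fps_X - fps_const c * fps_X ^ 2) * fps_deriv g = - g"
  shows "g = 0"
proof -
  have rec: "of_nat (Suc (Suc k)) * g $ Suc k = c * of_nat k * g $ k" for k
  proof -
    have "((fps_X - fps_const c * fps_X ^ 2) * fps_deriv g) $ Suc k = (- g) $ Suc k"
      by (simp only: ode)
    then show ?thesis
      by (cases k) (simp_all add: power2_eq_square algebra_simps)
  qed
  have "g $ n = 0" for n
  proof (induction n)
    case 0
    have "((fps_X - fps_const c * fps_X ^ 2) * fps_deriv g) $ 0 = (- g) $ 0"
      by (simp only: ode)
    then show ?case by simp
  next
    case (Suc n)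
    then show ?case using rec[of n] by (simp del: of_nat_Suc)
  qed
  then show ?thesis by (simp add: fps_ext)
qed

text \<open>By the ratio recurrence, \<open>g = 1 + x C\<^sup>2 - C\<close> solves \<open>(x - 4x\<^sup>2) g' = -g\<close>, which forces \<open>g = 0\<close>.\<close>

lemma catalan_fps_quadratic: "catalan_fps = 1 + fps_X * catalan_fps ^ 2"
proof -
  define C where "C = catalan_fps"
  define g where "g = 1 + fps_X * C ^ 2 - C"
  have "(fps_X - fps_const 4 * fps_X ^ 2) * fps_deriv g
      = (fps_X - fps_const 4 * fps_X ^ 2) * C ^ 2
        + (fps_const 2 * fps_X * C - 1) * ((fps_X - fps_const 4 * fps_X ^ 2) * fps_deriv C)"
    unfolding g_def by (simp add: algebra_simps power2_eq_square flip: numeral_fps_const)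
  also have "\<dots> = - g"
    unfolding C_def catalan_fps_ode unfolding g_def C_def
    by (simp add: algebra_simps power2_eq_square flip: numeral_fps_const)
  finally have "g = 0" by (rule fps_eq_0_of_ode)
  then show ?thesis unfolding g_def C_def by (simp add: algebra_simps)
qed

definition fps_even_part :: "'a::zero fps \<Rightarrow> 'a fps" where
  "fps_even_part f = Abs_fps (\<lambda>k. f $ (2 * k))"

definition fps_odd_part :: "'a::zero fps \<Rightarrow> 'a fps" where
  "fps_odd_part f = Abs_fps (\<lambda>k. f $ (2 * k + 1))"

lemma fps_compose_X_square_nth:
  fixes f :: "'a::comm_ring_1 fps"
  shows "(f oo fps_X ^ 2) $ n = (if even n then f $ (n div 2) else 0)"
proof -
  have "(f oo fps_X ^ 2) $ n = (\<Sum>i = 0..n. if even n \<and> i = n div 2 then f $ i else 0)"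
    unfolding fps_compose_nth by (rule sum.cong) (auto simp flip: power_mult)
  then show ?thesis by (simp add: sum.delta')
qed

lemma fps_even_part_eq:
  fixes f g :: "'a::comm_ring_1 fps"
  shows "fps_even_part ((f oo fps_X ^ 2) + fps_X * (g oo fps_X ^ 2)) = f"
  by (rule fps_ext) (simp add: fps_even_part_def fps_compose_X_square_nth fps_X_mult_nth fps_add_nth)

lemma fps_odd_part_eq:
  fixes f g :: "'a::comm_ring_1 fps"
  shows "fps_odd_part ((f oo fps_X ^ 2) + fps_X * (g oo fps_X ^ 2)) = g"
  by (rule fps_ext) (simp add: fps_odd_part_def fps_compose_X_square_nth fps_X_mult_nth fps_add_nth)

lemma fps_even_odd_decomposition:
  fixes f :: "'a::comm_ring_1 fps"
  shows "f = (fps_even_part f oo fps_X ^ 2) + fps_X * (fps_odd_part f oo fps_X ^ 2)"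
proof (rule fps_ext)
  fix n
  show "f $ n = ((fps_even_part f oo fps_X ^ 2) + fps_X * (fps_odd_part f oo fps_X ^ 2)) $ n"
    by (cases n) (auto simp: fps_even_part_def fps_odd_part_def fps_compose_X_square_nth fps_add_nth
        fps_X_mult_nth elim: oddE)
qed

lemma catalan_fps_even_odd:
  defines "E \<equiv> fps_even_part catalan_fps" and "D \<equiv> fps_odd_part catalan_fps"
  shows "E = 1 + 2 * fps_X * E * D" and "D = E ^ 2 + fps_X * D ^ 2"
proof -
  have X2: "(fps_X ^ 2 :: int fps) $ 0 = 0" by simp
  have "(E oo fps_X ^ 2) + fps_X * (D oo fps_X ^ 2) = catalan_fps"
    unfolding E_def D_def by (rule fps_even_odd_decomposition[symmetric])
  also have "\<dots> = 1 + fps_X * catalan_fps ^ 2"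
    by (rule catalan_fps_quadratic)
  also have "catalan_fps = (E oo fps_X ^ 2) + fps_X * (D oo fps_X ^ 2)"
    unfolding E_def D_def by (rule fps_even_odd_decomposition)
  also have "1 + fps_X * \<dots> ^ 2
      = (1 + 2 * fps_X ^ 2 * (E oo fps_X ^ 2) * (D oo fps_X ^ 2))
        + fps_X * ((E oo fps_X ^ 2) ^ 2 + fps_X ^ 2 * (D oo fps_X ^ 2) ^ 2)"
    by (simp add: algebra_simps power2_eq_square)
  also have "\<dots> = ((1 + 2 * fps_X * E * D) oo fps_X ^ 2) + fps_X * ((E ^ 2 + fps_X * D ^ 2) oo fps_X ^ 2)"
    by (simp add: fps_compose_add_distrib fps_compose_mult_distrib[OF X2] fps_compose_power[OF X2]
        fps_X_fps_compose_startby0[OF X2])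
  finally have eq: "(E oo fps_X ^ 2) + fps_X * (D oo fps_X ^ 2)
      = ((1 + 2 * fps_X * E * D) oo fps_X ^ 2) + fps_X * ((E ^ 2 + fps_X * D ^ 2) oo fps_X ^ 2)" .
  show "E = 1 + 2 * fps_X * E * D"
    using arg_cong[OF eq, of fps_even_part] by (simp only: fps_even_part_eq)
  show "D = E ^ 2 + fps_X * D ^ 2"
    using arg_cong[OF eq, of fps_odd_part] by (simp only: fps_odd_part_eq)
qed

lemma fps_square_quadratic_of_even_odd_system:
  fixes E D :: "'a::idom fps"
  assumes E: "E = 1 + 2 * fps_X * E * D" and D: "D = E ^ 2 + fps_X * D ^ 2"
  shows "E ^ 2 = 1 + fps_const 4 * fps_X * (E ^ 2) ^ 2"
proof -
  \<comment> \<open>With \<open>u = x D\<close> the system reads \<open>E (1 - 2u) = 1\<close> and \<open>x E\<^sup>2 = u - u\<^sup>2\<close>.\<close>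
  define u where "u = fps_X * D"
  define w where "w = 1 - 2 * u"
  have Ew: "E * w = 1"
    using E unfolding w_def u_def by (simp add: algebra_simps)
  have "u - u ^ 2 = fps_X * (D - fps_X * D ^ 2)"
    unfolding u_def by (simp add: algebra_simps power2_eq_square)
  also have "D - fps_X * D ^ 2 = E ^ 2"
    using D by (metis add_diff_cancel_right')
  finally have XE: "fps_X * E ^ 2 = u - u ^ 2" ..
  have "(E ^ 2 - 1 - fps_const 4 * fps_X * (E ^ 2) ^ 2) * w ^ 2
      = (E * w) ^ 2 - w ^ 2 - 4 * (fps_X * E ^ 2) * (E * w) ^ 2"
    by (simp add: algebra_simps power2_eq_square flip: numeral_fps_const)
  also have "\<dots> = 0"
    unfolding Ew XE unfolding w_def by (simp add: algebra_simps power2_eq_square)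
  finally have "(E ^ 2 - 1 - fps_const 4 * fps_X * (E ^ 2) ^ 2) * w ^ 2 = 0" .
  moreover have "w ^ 2 \<noteq> 0"
    using fps_nonzero_nth[of w] unfolding w_def u_def by auto
  ultimately have "E ^ 2 - 1 - fps_const 4 * fps_X * (E ^ 2) ^ 2 = 0"
    by (simp only: mult_eq_0_iff) blast
  then show ?thesis by (simp only: diff_diff_eq right_minus_eq)
qed

lemma fps_quadratic_unique:
  fixes c F G :: "'a::idom fps"
  assumes c: "c $ 0 = 0" and F: "F = 1 + c * F ^ 2" and G: "G = 1 + c * G ^ 2"
  shows "F = G"
proof -
  have "(F - G) * (1 - c * (F + G)) = (F - c * F ^ 2) - (G - c * G ^ 2)"
    by (simp add: algebra_simps power2_eq_square)
  also have "\<dots> = 0"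
    using F G by (metis add_diff_cancel_right' diff_self)
  finally have "(F - G) * (1 - c * (F + G)) = 0" .
  moreover have "1 - c * (F + G) \<noteq> 0"
    using c fps_nonzero_nth[of "1 - c * (F + G)"] by auto
  ultimately show ?thesis by simp
qed

lemma catalan_fps_scaled: "catalan_fps oo (fps_const 4 * fps_X) = fps_even_part catalan_fps ^ 2"
proof (rule fps_quadratic_unique)
  have X4: "(fps_const 4 * fps_X :: int fps) $ 0 = 0" by simp
  have "catalan_fps oo (fps_const 4 * fps_X) = (1 + fps_X * catalan_fps ^ 2) oo (fps_const 4 * fps_X)"
    by (subst catalan_fps_quadratic) (rule refl)
  also have "\<dots> = 1 + fps_const 4 * fps_X * (catalan_fps oo (fps_const 4 * fps_X)) ^ 2"
    by (simp add: fps_compose_add_distrib fps_compose_mult_distrib[OF X4] fps_compose_power[OF X4]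
        fps_X_fps_compose_startby0[OF X4])
  finally show "catalan_fps oo (fps_const 4 * fps_X)
      = 1 + fps_const 4 * fps_X * (catalan_fps oo (fps_const 4 * fps_X)) ^ 2" .
  show "fps_even_part catalan_fps ^ 2 = 1 + fps_const 4 * fps_X * (fps_even_part catalan_fps ^ 2) ^ 2"
    using catalan_fps_even_odd by (rule fps_square_quadratic_of_even_odd_system)
qed simp

lemma catalan_convolution:
  "4 ^ Suc m * int (catalan (Suc m)) - int (catalan (2 * m + 2))
     = 2 * (\<Sum>j\<le>m. 4 ^ j * int (catalan j) * int (catalan (2 * (m - j) + 1)))"
proof -
  define A where "A = catalan_fps oo (fps_const 4 * fps_X)"
  define E where "E = fps_even_part catalan_fps"
  define D where "D = fps_odd_part catalan_fps"
  have A: "A = E ^ 2"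
    unfolding A_def E_def by (rule catalan_fps_scaled)
  have "A - E = E * (E - 1)"
    unfolding A by (simp add: algebra_simps power2_eq_square)
  also have "E - 1 = 2 * fps_X * E * D"
    using catalan_fps_even_odd(1) unfolding E_def D_def by (metis add_diff_cancel_left')
  also have "E * (2 * fps_X * E * D) = fps_const 2 * (fps_X * (A * D))"
    unfolding A by (simp add: algebra_simps power2_eq_square flip: numeral_fps_const)
  finally have "(A - E) $ Suc m = (fps_const 2 * (fps_X * (A * D))) $ Suc m"
    by (rule arg_cong)
  also have "\<dots> = 2 * (A * D) $ m"
    by simp
  also have "(A * D) $ m = (\<Sum>j\<le>m. 4 ^ j * int (catalan j) * int (catalan (2 * (m - j) + 1)))"
    unfolding fps_mult_nth atLeast0AtMost by (simp add: A_def D_def fps_odd_part_def)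
  also have "(A - E) $ Suc m = 4 ^ Suc m * int (catalan (Suc m)) - int (catalan (2 * m + 2))"
    by (simp add: A_def E_def fps_even_part_def)
  finally show ?thesis .
qed

theorem lemma3:
  fixes n :: nat
  assumes "n \<ge> 2"
  shows "(\<Sum>i = 1..n - 1. (2::int) ^ (2 * i - 1) * int (catalan (i - 1)) * int (catalan (2 * n - 1 - 2 * i)))
         = 4 ^ (n - 1) * int (catalan (n - 1)) - int (catalan (2 * n - 2))"
proof -
  obtain m where n: "n = Suc (Suc m)"
    using assms by (metis add_2_eq_Suc le_Suc_ex)
  have "(\<Sum>i = 1..n - 1. (2::int) ^ (2 * i - 1) * int (catalan (i - 1)) * int (catalan (2 * n - 1 - 2 * i)))
      = (\<Sum>j\<le>m. 2 ^ (2 * j + 1) * int (catalan j) * int (catalan (2 * n - 3 - 2 * j)))"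
    unfolding n diff_Suc_1 unfolding One_nat_def sum.shift_bounds_cl_Suc_ivl atLeast0AtMost by simp
  also have "\<dots> = 2 * (\<Sum>j\<le>m. 4 ^ j * int (catalan j) * int (catalan (2 * (m - j) + 1)))"
    unfolding sum_distrib_left
    by (rule sum.cong) (simp_all add: n power_mult Suc_diff_le diff_mult_distrib2)
  also have "\<dots> = 4 ^ (n - 1) * int (catalan (n - 1)) - int (catalan (2 * n - 2))"
    unfolding catalan_convolution[symmetric] n by simp
  finally show ?thesis .
qed

end
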